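(* For each $N\ge2$ let $L=\frac{2}{N-1}\sum_{1\le i<j\le N}(Q_{(i,j)}-I)$ act on bounded measurable functions on ${\mathbb T}_N=({\mathbb S}^1)^N$, where the $Q_{(i,j)}$ are Markov operators, each acting only through $v_i,v_j$ (so $Q_{(i,j)}\varphi=\varphi$ whenever $\varphi$ depends on neither $v_i$ nor $v_j$), forming a permutation-covariant family (all obtained from one two-particle Markov operator by relabeling variables). Let $F_{0,N}$ be a symmetric probability density on ${\mathbb T}_N$, and let $\varphi^{(k)}\in L^\infty$ depend only on $v_1,\dots,v_k$. Define $$\varphi^{(k+1)}(v_1,\dots,v_{k+1})=2\sum_{i=1}^k(Q_{(i,k+1)}-I)\varphi^{(k)}(v_1,\dots,v_k).$$ Then, if $N\ge k+1$, $$\int_{{\mathbb T}_N}F_{0,N}\,L\varphi^{(k)}\,{\rm d}v_1\cdots{\rm d}v_N=\int_{{\mathbb T}_N}F_{0,N}\,\big(\varphi^{(k+1)}+\tilde\varphi^{(k+1)}\big)\,{\rm d}v_1\cdots{\rm d}v_N,$$ where $\tilde\varphi^{(k+1)}$ depends only on $v_1,\dots,v_{k+1}$ and satisfies $\|\tilde\varphi^{(k+1)}\|_\infty\le 6\,\frac{k(k-1)}{N-1}\,\|\varphi^{(k)}\|_\infty$.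
   Context: ${\mathbb S}^1$ is the unit circle with normalized uniform measure; a Markov operator is a positive linear operator $Q$ with $Q1=1$. A density on ${\mathbb T}_N$ is symmetric if it is invariant under all permutations of $(v_1,\dots,v_N)$. *)

theory Defs
  imports "HOL-Analysis.Analysis" "HOL-Combinatorics.Permutations"
begin

definition circle :: "complex measure" where
  "circle = distr (uniform_measure lborel {0..<1::real}) (restrict_space borel (sphere 0 1))
              (\<lambda>t. cis (2 * pi * t))"

text \<open>The torus T_N = (S^1)^N; coordinates are indexed 0..N-1 (v_1..v_N in the paper).\<close>
definition torus :: "nat \<Rightarrow> (nat \<Rightarrow> complex) measure" where
  "torus N = PiM {..<N} (\<lambda>_. circle)"

definition bounded_meas :: "'a measure \<Rightarrow> ('a \<Rightarrow> real) \<Rightarrow> bool" where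
  "bounded_meas M f \<longleftrightarrow> f \<in> borel_measurable M \<and> (\<exists>B. \<forall>x\<in>space M. \<bar>f x\<bar> \<le> B)"

definition markov_op :: "'a measure \<Rightarrow> (('a \<Rightarrow> real) \<Rightarrow> 'a \<Rightarrow> real) \<Rightarrow> bool" where
  "markov_op M Q \<longleftrightarrow>
     (\<forall>f. bounded_meas M f \<longrightarrow> bounded_meas M (Q f)) \<and>
     (\<forall>f g. bounded_meas M f \<longrightarrow> bounded_meas M g \<longrightarrow>
        (\<forall>x\<in>space M. Q (\<lambda>y. f y + g y) x = Q f x + Q g x)) \<and>
     (\<forall>f c. bounded_meas M f \<longrightarrow> (\<forall>x\<in>space M. Q (\<lambda>y. c * f y) x = c * Q f x)) \<and>
     (\<forall>f. bounded_meas M f \<longrightarrow> (\<forall>x\<in>space M. f x \<ge> 0) \<longrightarrow> (\<forall>x\<in>space M. Q f x \<ge> 0)) \<and>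
     (\<forall>x\<in>space M. Q (\<lambda>_. 1) x = 1)"

definition Qij :: "(((complex \<times> complex) \<Rightarrow> real) \<Rightarrow> (complex \<times> complex) \<Rightarrow> real)
     \<Rightarrow> nat \<Rightarrow> nat \<Rightarrow> ((nat \<Rightarrow> complex) \<Rightarrow> real) \<Rightarrow> (nat \<Rightarrow> complex) \<Rightarrow> real" where
  "Qij Q i j \<phi> v = Q (\<lambda>(a, b). \<phi> (v(i := a, j := b))) (v i, v j)"

definition Lop :: "nat \<Rightarrow> (((complex \<times> complex) \<Rightarrow> real) \<Rightarrow> (complex \<times> complex) \<Rightarrow> real)
     \<Rightarrow> ((nat \<Rightarrow> complex) \<Rightarrow> real) \<Rightarrow> (nat \<Rightarrow> complex) \<Rightarrow> real" where
  "Lop N Q \<phi> v = 2 / (real N - 1) * (\<Sum>j<N. \<Sum>i<j. (Qij Q i j \<phi> v - \<phi> v))"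

definition depends_only :: "nat \<Rightarrow> nat \<Rightarrow> ((nat \<Rightarrow> complex) \<Rightarrow> real) \<Rightarrow> bool" where
  "depends_only N k \<phi> \<longleftrightarrow>
     (\<forall>v\<in>space (torus N). \<forall>w\<in>space (torus N). (\<forall>i<k. v i = w i) \<longrightarrow> \<phi> v = \<phi> w)"

definition sup_norm :: "'a measure \<Rightarrow> ('a \<Rightarrow> real) \<Rightarrow> real" where
  "sup_norm M f = (SUP x\<in>space M. \<bar>f x\<bar>)"

definition symmetric_density :: "nat \<Rightarrow> ((nat \<Rightarrow> complex) \<Rightarrow> real) \<Rightarrow> bool" where
  "symmetric_density N F \<longleftrightarrow>
     F \<in> borel_measurable (torus N) \<and> (\<forall>v\<in>space (torus N). F v \<ge> 0) \<and>
     integrable (torus N) F \<and> (\<integral>v. F v \<partial>torus N) = 1 \<and>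
     (\<forall>\<sigma>. \<sigma> permutes {..<N} \<longrightarrow> (\<forall>v\<in>space (torus N). F (v \<circ> \<sigma>) = F v))"

end

theory Submission
  imports Defs "HOL-Probability.Infinite_Product_Measure"
begin

text \<open>Split the pairs \<open>i < j\<close> of \<open>L\<close> into pairs inside the first \<open>k\<close> variables, cross pairs
  \<open>i < k \<le> j\<close>, and pairs with \<open>k \<le> i\<close>, on which \<open>Q_(i,j) - I\<close> annihilates \<open>\<phi>\<close>. Since \<open>F\<close> is
  exchangeable and \<open>\<phi>\<close> does not see \<open>v_j\<close> for \<open>j \<ge> k\<close>, transposing \<open>v_k\<close> and \<open>v_j\<close> shows that every
  cross pair \<open>(i, j)\<close> integrates against \<open>F\<close> like \<open>(i, k)\<close>. The \<open>N - k\<close> cross pairs therefore carry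
  total weight \<open>2(N - k)/(N - 1) = 2 - 2(k - 1)/(N - 1)\<close>, which produces \<open>\<phi>^(k+1)\<close>; the correction
  \<open>-2(k - 1)/(N - 1)\<close> and the \<open>k(k - 1)/2\<close> inner pairs contribute at most \<open>4 k(k - 1)/(N - 1) \<parallel>\<phi>\<parallel>\<close>
  and \<open>2 k(k - 1)/(N - 1) \<parallel>\<phi>\<parallel>\<close>.\<close>

section \<open>The circle and the torus\<close>

lemma space_circle: "space circle = sphere 0 1"
  by (simp add: circle_def space_restrict_space)

lemma prob_space_circle: "prob_space circle"
  unfolding circle_def
proof (rule prob_space.prob_space_distr)
  show "prob_space (uniform_measure lborel {0..<1::real})"
    by (intro prob_space_uniform_measure) auto
  have "(\<lambda>t::real. cis (2 * pi * t)) \<in> borel_measurable borel"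
    by (intro borel_measurable_continuous_onI continuous_intros)
  then show "(\<lambda>t. cis (2 * pi * t)) \<in> uniform_measure lborel {0..<1::real} \<rightarrow>\<^sub>M restrict_space borel (sphere 0 1)"
    by (intro measurable_restrict_space2) (auto cong: measurable_cong_sets)
qed

lemma space_torus: "space (torus N) = PiE {..<N} (\<lambda>_. sphere 0 1)"
  by (simp add: torus_def space_PiM space_circle)

lemma space_circle_pair: "space (circle \<Otimes>\<^sub>M circle) = sphere 0 1 \<times> sphere 0 1"
  by (simp add: space_pair_measure space_circle)

lemma fun_upd_in_space_torus:
  assumes "v \<in> space (torus N)" "i < N" "j < N" "a \<in> sphere 0 1" "b \<in> sphere 0 1"
  shows "v(i := a, j := b) \<in> space (torus N)"
  using assms by (auto simp: space_torus PiE_iff extensional_def)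

lemma comp_permutes_in_space_torus:
  assumes "\<sigma> permutes {..<N}" "v \<in> space (torus N)"
  shows "v \<circ> \<sigma> \<in> space (torus N)"
  using assms permutes_in_image[OF assms(1)] permutes_not_in[OF assms(1)]
  by (auto simp: space_torus PiE_iff extensional_def)

lemma coordinates_in_space_circle_pair:
  "v \<in> space (torus N) \<Longrightarrow> i < N \<Longrightarrow> j < N \<Longrightarrow> (v i, v j) \<in> space (circle \<Otimes>\<^sub>M circle)"
  by (auto simp: space_circle_pair space_torus PiE_iff)

lemma measurable_fun_upd_torus:
  assumes v: "v \<in> space (torus N)" and ij: "i < N" "j < N"
  shows "(\<lambda>p. v(i := fst p, j := snd p)) \<in> circle \<Otimes>\<^sub>M circle \<rightarrow>\<^sub>M torus N"
  unfolding torus_def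
proof (rule measurable_PiM_single')
  fix l assume "l \<in> {..<N}"
  then have "v l \<in> space circle" using v by (auto simp: space_torus space_circle PiE_iff)
  then show "(\<lambda>p. (v(i := fst p, j := snd p)) l) \<in> circle \<Otimes>\<^sub>M circle \<rightarrow>\<^sub>M circle"
    by (cases "l = j"; cases "l = i") auto
next
  show "(\<lambda>p. v(i := fst p, j := snd p)) \<in> space (circle \<Otimes>\<^sub>M circle) \<rightarrow> {..<N} \<rightarrow>\<^sub>E space circle"
    using fun_upd_in_space_torus[OF v ij]
    by (force simp: space_circle_pair space_torus space_circle simp del: fun_upd_apply)
qed

lemma integral_torus_permute:
  fixes f :: "(nat \<Rightarrow> complex) \<Rightarrow> real"
  assumes p: "\<sigma> permutes {..<N}" and f: "f \<in> borel_measurable (torus N)"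
  shows "(\<integral>v. f (v \<circ> \<sigma>) \<partial>torus N) = (\<integral>v. f v \<partial>torus N)"
proof -
  let ?r = "\<lambda>v. \<lambda>n\<in>{..<N}. v (\<sigma> n)"
  have into: "\<sigma> \<in> {..<N} \<rightarrow> {..<N}" using permutes_in_image[OF p] by auto
  have distr_eq: "distr (torus N) (torus N) ?r = torus N"
    using distr_PiM_reindex[OF prob_space_circle permutes_inj_on[OF p] into]
    by (simp add: torus_def)
  have r_meas: "?r \<in> torus N \<rightarrow>\<^sub>M torus N"
    unfolding torus_def using into by (intro measurable_restrict measurable_component_singleton) auto
  have r_eq: "?r v = v \<circ> \<sigma>" if "v \<in> space (torus N)" for v
    using that permutes_not_in[OF p] by (auto simp: space_torus PiE_iff extensional_def)
  have "(\<integral>v. f v \<partial>torus N) = (\<integral>v. f (?r v) \<partial>torus N)"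
    using integral_distr[OF r_meas f] distr_eq by simp
  also have "\<dots> = (\<integral>v. f (v \<circ> \<sigma>) \<partial>torus N)"
    by (rule Bochner_Integration.integral_cong) (simp_all add: r_eq)
  finally show ?thesis by simp
qed

section \<open>Markov operators on bounded measurable functions\<close>

lemma bounded_meas_const: "bounded_meas M (\<lambda>_. c)"
  unfolding bounded_meas_def by auto

lemma bounded_meas_add:
  assumes "bounded_meas M f" "bounded_meas M g"
  shows "bounded_meas M (\<lambda>x. f x + g x)"
proof -
  obtain B C where "\<forall>x\<in>space M. \<bar>f x\<bar> \<le> B" "\<forall>x\<in>space M. \<bar>g x\<bar> \<le> C"
    and "f \<in> borel_measurable M" "g \<in> borel_measurable M"
    using assms unfolding bounded_meas_def by blast
  then show ?thesis
    unfolding bounded_meas_def by (intro conjI exI[of _ "B + C"] borel_measurable_add) force+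
qed

lemma bounded_meas_cmult: "bounded_meas M f \<Longrightarrow> bounded_meas M (\<lambda>x. c * f x)"
  unfolding bounded_meas_def
  by (auto simp: abs_mult intro!: exI[of _ "\<bar>c\<bar> * _"] mult_left_mono)

lemma bounded_meas_diff:
  "bounded_meas M f \<Longrightarrow> bounded_meas M g \<Longrightarrow> bounded_meas M (\<lambda>x. f x - g x)"
  using bounded_meas_add[of M f "\<lambda>x. -1 * g x"] bounded_meas_cmult[of M g "-1"] by simp

lemma bounded_meas_sum:
  "(\<And>i. i \<in> I \<Longrightarrow> bounded_meas M (f i)) \<Longrightarrow> bounded_meas M (\<lambda>x. \<Sum>i\<in>I. f i x)"
  by (induction I rule: infinite_finite_induct) (auto intro: bounded_meas_add bounded_meas_const)

lemma abs_le_sup_norm: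
  assumes "bounded_meas M f" "x \<in> space M"
  shows "\<bar>f x\<bar> \<le> sup_norm M f"
  using assms unfolding sup_norm_def bounded_meas_def
  by (auto intro!: cSUP_upper simp: bdd_above_def)

lemma integrable_mult_bounded_meas:
  fixes F h :: "'a \<Rightarrow> real"
  assumes F: "integrable M F" and h: "bounded_meas M h"
  shows "integrable M (\<lambda>x. F x * h x)"
proof -
  obtain B where B: "\<forall>x\<in>space M. \<bar>h x\<bar> \<le> B" and hm: "h \<in> borel_measurable M"
    using h unfolding bounded_meas_def by blast
  have bound: "\<bar>F x * h x\<bar> \<le> \<bar>B * F x\<bar>" if "x \<in> space M" for x
  proof -
    have "\<bar>h x\<bar> \<le> \<bar>B\<bar>" using B that by force
    then have "\<bar>F x\<bar> * \<bar>h x\<bar> \<le> \<bar>F x\<bar> * \<bar>B\<bar>" by (rule mult_left_mono) simp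
    then show ?thesis by (metis abs_mult mult.commute)
  qed
  show ?thesis
  proof (rule Bochner_Integration.integrable_bound)
    show "integrable M (\<lambda>x. B * F x)" using F by simp
    show "(\<lambda>x. F x * h x) \<in> borel_measurable M" using borel_measurable_integrable[OF F] hm by simp
    show "AE x in M. norm (F x * h x) \<le> norm (B * F x)" using bound by (intro AE_I2) simp
  qed
qed

lemma markov_op_const:
  assumes "markov_op M Q" "x \<in> space M"
  shows "Q (\<lambda>_. c) x = c"
proof -
  have "Q (\<lambda>y. c * 1) x = c * Q (\<lambda>_. 1) x"
    using assms bounded_meas_const[of M 1] unfolding markov_op_def by blast
  then show ?thesis using assms unfolding markov_op_def by simp
qed

lemma markov_op_mono:
  assumes Q: "markov_op M Q" and f: "bounded_meas M f" and g: "bounded_meas M g"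
    and le: "\<forall>y\<in>space M. f y \<le> g y" and x: "x \<in> space M"
  shows "Q f x \<le> Q g x"
proof -
  have h: "bounded_meas M (\<lambda>y. g y - f y)" using bounded_meas_diff[OF g f] .
  have "Q (\<lambda>y. f y + (g y - f y)) x = Q f x + Q (\<lambda>y. g y - f y) x"
    using Q f h x unfolding markov_op_def by blast
  moreover have "Q (\<lambda>y. g y - f y) x \<ge> 0"
    using Q h le x unfolding markov_op_def by auto
  ultimately show ?thesis by simp
qed

lemma markov_op_cong:
  assumes "markov_op M Q" "bounded_meas M f" "bounded_meas M g"
    and "\<forall>y\<in>space M. f y = g y" "x \<in> space M"
  shows "Q f x = Q g x"
  using markov_op_mono[of M Q f g x] markov_op_mono[of M Q g f x] assms by force

lemma markov_op_abs_le:
  assumes Q: "markov_op M Q" and f: "bounded_meas M f"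
    and B: "\<forall>y\<in>space M. \<bar>f y\<bar> \<le> B" and x: "x \<in> space M"
  shows "\<bar>Q f x\<bar> \<le> B"
  using markov_op_mono[OF Q f bounded_meas_const _ x, of B] markov_op_mono[OF Q bounded_meas_const f _ x, of "-B"]
    markov_op_const[OF Q x] B by force

lemma bounded_meas_fun_upd_torus:
  assumes v: "v \<in> space (torus N)" and ij: "i < N" "j < N" and \<phi>: "bounded_meas (torus N) \<phi>"
  shows "bounded_meas (circle \<Otimes>\<^sub>M circle) (\<lambda>(a, b). \<phi> (v(i := a, j := b)))"
proof -
  obtain B where B: "\<forall>x\<in>space (torus N). \<bar>\<phi> x\<bar> \<le> B" and m: "\<phi> \<in> borel_measurable (torus N)"
    using \<phi> unfolding bounded_meas_def by blast
  have "(\<lambda>p. \<phi> (v(i := fst p, j := snd p))) \<in> borel_measurable (circle \<Otimes>\<^sub>M circle)"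
    using measurable_compose[OF measurable_fun_upd_torus[OF v ij] m] .
  then show ?thesis
    using B fun_upd_in_space_torus[OF v ij]
    unfolding bounded_meas_def by (auto simp: case_prod_beta' space_circle_pair intro!: exI[of _ B])
qed

lemma Qij_cong:
  assumes Q: "markov_op (circle \<Otimes>\<^sub>M circle) Q"
    and v: "v \<in> space (torus N)" and w: "w \<in> space (torus N)"
    and ij: "i < N" "j < N" and ij': "i' < N" "j' < N"
    and \<phi>: "bounded_meas (torus N) \<phi>" and \<psi>: "bounded_meas (torus N) \<psi>"
    and coords: "v i = w i'" "v j = w j'"
    and sections: "\<And>a b. a \<in> sphere 0 1 \<Longrightarrow> b \<in> sphere 0 1 \<Longrightarrow>
                     \<phi> (v(i := a, j := b)) = \<psi> (w(i' := a, j' := b))"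
  shows "Qij Q i j \<phi> v = Qij Q i' j' \<psi> w"
  unfolding Qij_def coords[symmetric]
  by (rule markov_op_cong[OF Q bounded_meas_fun_upd_torus[OF v ij \<phi>] bounded_meas_fun_upd_torus[OF w ij' \<psi>]
        _ coordinates_in_space_circle_pair[OF v ij]])
    (auto simp: space_circle_pair sections)

lemma Qij_eq_self:
  assumes Q: "markov_op (circle \<Otimes>\<^sub>M circle) Q"
    and v: "v \<in> space (torus N)" and ij: "i < N" "j < N" and \<phi>: "bounded_meas (torus N) \<phi>"
    and sections: "\<And>a b. a \<in> sphere 0 1 \<Longrightarrow> b \<in> sphere 0 1 \<Longrightarrow> \<phi> (v(i := a, j := b)) = \<phi> v"
  shows "Qij Q i j \<phi> v = \<phi> v"
proof -
  have "Qij Q i j \<phi> v = Q (\<lambda>_. \<phi> v) (v i, v j)"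
    unfolding Qij_def
    by (rule markov_op_cong[OF Q bounded_meas_fun_upd_torus[OF v ij \<phi>] bounded_meas_const
          _ coordinates_in_space_circle_pair[OF v ij]])
      (auto simp: space_circle_pair sections)
  also have "\<dots> = \<phi> v" by (rule markov_op_const[OF Q coordinates_in_space_circle_pair[OF v ij]])
  finally show ?thesis .
qed

lemma abs_Qij_le_sup_norm:
  assumes Q: "markov_op (circle \<Otimes>\<^sub>M circle) Q"
    and v: "v \<in> space (torus N)" and ij: "i < N" "j < N" and \<phi>: "bounded_meas (torus N) \<phi>"
  shows "\<bar>Qij Q i j \<phi> v\<bar> \<le> sup_norm (torus N) \<phi>"
  unfolding Qij_def
  using abs_le_sup_norm[OF \<phi>] fun_upd_in_space_torus[OF v ij]
  by (intro markov_op_abs_le[OF Q bounded_meas_fun_upd_torus[OF v ij \<phi>] _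
        coordinates_in_space_circle_pair[OF v ij]]) (auto simp: space_circle_pair)

section \<open>Action on a function of the first \<open>k\<close> variables\<close>

locale pair_interaction =
  fixes N k :: nat
    and Q :: "((complex \<times> complex) \<Rightarrow> real) \<Rightarrow> (complex \<times> complex) \<Rightarrow> real"
    and \<phi> :: "(nat \<Rightarrow> complex) \<Rightarrow> real"
  assumes two_le_N: "2 \<le> N"
    and k_less_N: "k < N"
    and markov: "markov_op (circle \<Otimes>\<^sub>M circle) Q"
    and measurable_Qij: "\<And>i j \<psi>. i < N \<Longrightarrow> j < N \<Longrightarrow> i \<noteq> j \<Longrightarrow> bounded_meas (torus N) \<psi> \<Longrightarrow>
           Qij Q i j \<psi> \<in> borel_measurable (torus N)"
    and bounded: "bounded_meas (torus N) \<phi>"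
    and depends: "depends_only N k \<phi>"
begin

definition collision_term :: "nat \<Rightarrow> nat \<Rightarrow> (nat \<Rightarrow> complex) \<Rightarrow> real" where
  "collision_term i j v = Qij Q i j \<phi> v - \<phi> v"

lemma \<phi>_eqI:
  "v \<in> space (torus N) \<Longrightarrow> w \<in> space (torus N) \<Longrightarrow> (\<And>l. l < k \<Longrightarrow> v l = w l) \<Longrightarrow> \<phi> v = \<phi> w"
  using depends unfolding depends_only_def by blast

lemma borel_measurable_\<phi>: "\<phi> \<in> borel_measurable (torus N)"
  using bounded unfolding bounded_meas_def by blast

lemma measurable_collision_term:
  assumes "i < N" "j < N" "i \<noteq> j"
  shows "collision_term i j \<in> borel_measurable (torus N)"
  using measurable_Qij[OF assms bounded] borel_measurable_\<phi>
  unfolding collision_term_def[abs_def] by measurable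

lemma abs_collision_term_le:
  "v \<in> space (torus N) \<Longrightarrow> i < N \<Longrightarrow> j < N \<Longrightarrow> \<bar>collision_term i j v\<bar> \<le> 2 * sup_norm (torus N) \<phi>"
  using abs_Qij_le_sup_norm[OF markov _ _ _ bounded] abs_le_sup_norm[OF bounded, of v]
  unfolding collision_term_def by fastforce

lemma bounded_meas_collision_term:
  "i < N \<Longrightarrow> j < N \<Longrightarrow> i \<noteq> j \<Longrightarrow> bounded_meas (torus N) (collision_term i j)"
  using measurable_collision_term abs_collision_term_le unfolding bounded_meas_def by blast

lemma collision_term_eq_0:
  assumes v: "v \<in> space (torus N)" and ij: "k \<le> i" "k \<le> j" "i < N" "j < N"
  shows "collision_term i j v = 0"
proof -
  have "Qij Q i j \<phi> v = \<phi> v"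
    using ij by (intro Qij_eq_self[OF markov v _ _ bounded] \<phi>_eqI fun_upd_in_space_torus v) auto
  then show ?thesis unfolding collision_term_def by simp
qed

lemma collision_term_cong:
  assumes v: "v \<in> space (torus N)" and w: "w \<in> space (torus N)" and ij: "i \<le> k" "j \<le> k"
    and vw: "\<And>l. l \<le> k \<Longrightarrow> v l = w l"
  shows "collision_term i j v = collision_term i j w"
proof -
  have ij': "i < N" "j < N" using ij k_less_N by auto
  have "Qij Q i j \<phi> v = Qij Q i j \<phi> w"
    using ij ij' vw
    by (intro Qij_cong[OF markov v w ij' ij' bounded bounded] \<phi>_eqI fun_upd_in_space_torus v w) auto
  moreover have "\<phi> v = \<phi> w" using vw by (intro \<phi>_eqI[OF v w]) auto
  ultimately show ?thesis unfolding collision_term_def by simp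
qed

lemma collision_term_transpose:
  assumes v: "v \<in> space (torus N)" and ij: "i < k" "k < j" "j < N"
  shows "collision_term i j (v \<circ> Transposition.transpose k j) = collision_term i k v"
proof -
  let ?\<sigma> = "Transposition.transpose k j"
  have v\<sigma>: "v \<circ> ?\<sigma> \<in> space (torus N)"
    using ij by (intro comp_permutes_in_space_torus[OF _ v] permutes_swap_id) auto
  have "Qij Q i j \<phi> (v \<circ> ?\<sigma>) = Qij Q i k \<phi> v"
    using ij
    by (intro Qij_cong[OF markov v\<sigma> v _ _ _ _ bounded bounded] \<phi>_eqI fun_upd_in_space_torus v v\<sigma>)
      (auto simp: transpose_def)
  moreover have "\<phi> (v \<circ> ?\<sigma>) = \<phi> v"
    using ij by (intro \<phi>_eqI[OF v\<sigma> v]) (auto simp: transpose_def)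
  ultimately show ?thesis unfolding collision_term_def by simp
qed

lemma integral_collision_term_transpose:
  assumes F: "symmetric_density N F" and ij: "i < k" "k \<le> j" "j < N"
  shows "(\<integral>v. F v * collision_term i j v \<partial>torus N) = (\<integral>v. F v * collision_term i k v \<partial>torus N)"
proof (cases "j = k")
  case False
  let ?\<sigma> = "Transposition.transpose k j"
  have \<sigma>: "?\<sigma> permutes {..<N}" using ij by (intro permutes_swap_id) auto
  have "F \<in> borel_measurable (torus N)" using F unfolding symmetric_density_def by blast
  then have "(\<lambda>v. F v * collision_term i j v) \<in> borel_measurable (torus N)"
    using ij False by (intro borel_measurable_times measurable_collision_term) auto
  then have "(\<integral>v. F v * collision_term i j v \<partial>torus N)
      = (\<integral>v. F (v \<circ> ?\<sigma>) * collision_term i j (v \<circ> ?\<sigma>) \<partial>torus N)"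
    by (rule integral_torus_permute[OF \<sigma>, symmetric])
  also have "\<dots> = (\<integral>v. F v * collision_term i k v \<partial>torus N)"
    using F \<sigma> ij False collision_term_transpose
    by (intro Bochner_Integration.integral_cong) (auto simp: symmetric_density_def)
  finally show ?thesis .
qed simp

lemma Lop_eq_sum_collision_terms:
  assumes v: "v \<in> space (torus N)"
  shows "Lop N Q \<phi> v = 2 / (real N - 1) *
           ((\<Sum>j<k. \<Sum>i<j. collision_term i j v) + (\<Sum>i<k. \<Sum>j\<in>{k..<N}. collision_term i j v))"
proof -
  have split: "sum f {..<n} = sum f {..<m} + sum f {m..<n}" if "m \<le> n" for f :: "nat \<Rightarrow> real" and m n
    using that by (metis atLeast0LessThan le0 sum.atLeastLessThan_concat)
  have "(\<Sum>j\<in>{k..<N}. \<Sum>i<j. collision_term i j v) = (\<Sum>j\<in>{k..<N}. \<Sum>i<k. collision_term i j v)"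
  proof (rule sum.cong[OF refl])
    fix j assume j: "j \<in> {k..<N}"
    have "(\<Sum>i\<in>{k..<j}. collision_term i j v) = 0"
      using j by (intro sum.neutral ballI collision_term_eq_0[OF v]) auto
    then show "(\<Sum>i<j. collision_term i j v) = (\<Sum>i<k. collision_term i j v)"
      using split[of k j] j by simp
  qed
  then have "(\<Sum>j<N. \<Sum>i<j. collision_term i j v)
      = (\<Sum>j<k. \<Sum>i<j. collision_term i j v) + (\<Sum>i<k. \<Sum>j\<in>{k..<N}. collision_term i j v)"
    using split[of k N] k_less_N sum.swap by simp
  then show ?thesis unfolding Lop_def collision_term_def by simp
qed

text \<open>The function \<open>\<tilde>\<phi>^(k+1)\<close>: inner pairs plus the weight correction of the cross pairs.\<close>
definition collision_remainder :: "(nat \<Rightarrow> complex) \<Rightarrow> real" where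
  "collision_remainder v =
     2 / (real N - 1) * (\<Sum>j<k. \<Sum>i<j. collision_term i j v)
     - 2 * (real k - 1) / (real N - 1) * (\<Sum>i<k. collision_term i k v)"

lemma bounded_meas_collision_remainder: "bounded_meas (torus N) collision_remainder"
  unfolding collision_remainder_def[abs_def] using k_less_N
  by (intro bounded_meas_diff bounded_meas_cmult bounded_meas_sum bounded_meas_collision_term) auto

lemma depends_only_collision_remainder: "depends_only N (k + 1) collision_remainder"
  unfolding depends_only_def collision_remainder_def
  by (intro ballI impI arg_cong2[where f = "(-)"] arg_cong2[where f = "(*)"] refl sum.cong
      collision_term_cong) auto

lemma abs_collision_remainder_le:
  assumes v: "v \<in> space (torus N)"
  shows "\<bar>collision_remainder v\<bar> \<le> 6 * (real k * (real k - 1)) / (real N - 1) * sup_norm (torus N) \<phi>"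
proof -
  let ?s = "sup_norm (torus N) \<phi>"
  have N1: "real N - 1 > 0" using two_le_N by simp
  have pairs: "\<bar>\<Sum>j<k. \<Sum>i<j. collision_term i j v\<bar> \<le> real k * (real k - 1) * ?s"
  proof -
    have "\<bar>\<Sum>j<k. \<Sum>i<j. collision_term i j v\<bar> \<le> (\<Sum>j<k. \<Sum>i<j. 2 * ?s)"
      using k_less_N
      by (intro order_trans[OF sum_abs] sum_mono order_trans[OF sum_abs] abs_collision_term_le[OF v]) auto
    also have "\<dots> = 2 * (\<Sum>j<k. real j) * ?s"
      by (simp add: sum_distrib_left sum_distrib_right mult_ac)
    also have "2 * (\<Sum>j<k. real j) = real k * (real k - 1)"
      by (induction k) (auto simp: algebra_simps)
    finally show ?thesis .
  qed
  have last: "\<bar>\<Sum>i<k. collision_term i k v\<bar> \<le> 2 * real k * ?s"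
    using order_trans[OF sum_abs sum_mono[of "{..<k}" "\<lambda>i. \<bar>collision_term i k v\<bar>" "\<lambda>_. 2 * ?s"]]
      abs_collision_term_le[OF v] k_less_N by simp
  show ?thesis
  proof (cases "k = 0")
    case False
    let ?a = "2 / (real N - 1)" and ?c = "2 * (real k - 1) / (real N - 1)"
    have coeffs: "0 \<le> ?a" "0 \<le> ?c" using N1 False by auto
    have "\<bar>collision_remainder v\<bar> \<le>
        \<bar>?a * (\<Sum>j<k. \<Sum>i<j. collision_term i j v)\<bar> + \<bar>?c * (\<Sum>i<k. collision_term i k v)\<bar>"
      unfolding collision_remainder_def by (rule abs_triangle_ineq4)
    also have "\<dots> =
        ?a * \<bar>\<Sum>j<k. \<Sum>i<j. collision_term i j v\<bar> + ?c * \<bar>\<Sum>i<k. collision_term i k v\<bar>"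
      by (simp only: abs_mult abs_of_nonneg[OF coeffs(1)] abs_of_nonneg[OF coeffs(2)])
    also have "\<dots> \<le> ?a * (real k * (real k - 1) * ?s) + ?c * (2 * real k * ?s)"
      by (intro add_mono mult_left_mono pairs last coeffs)
    also have "\<dots> = 6 * (real k * (real k - 1)) / (real N - 1) * ?s"
      using N1 by (simp add: divide_simps)
    finally show ?thesis .
  qed (unfold collision_remainder_def, simp)
qed

lemma integrable_density_mult:
  "symmetric_density N F \<Longrightarrow> bounded_meas (torus N) h \<Longrightarrow> integrable (torus N) (\<lambda>v. F v * h v)"
  by (rule integrable_mult_bounded_meas) (simp_all add: symmetric_density_def)

lemma integral_density_cross_terms:
  assumes F: "symmetric_density N F"
  shows "(\<integral>v. F v * (\<Sum>i<k. \<Sum>j\<in>{k..<N}. collision_term i j v) \<partial>torus N)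
           = (real N - real k) * (\<integral>v. F v * (\<Sum>i<k. collision_term i k v) \<partial>torus N)"
proof -
  have int: "integrable (torus N) (\<lambda>v. F v * collision_term i j v)" if "i < k" "k \<le> j" "j < N" for i j
    using that by (intro integrable_density_mult[OF F] bounded_meas_collision_term) auto
  have "(\<integral>v. F v * (\<Sum>i<k. \<Sum>j\<in>{k..<N}. collision_term i j v) \<partial>torus N)
      = (\<Sum>i<k. \<integral>v. (\<Sum>j\<in>{k..<N}. F v * collision_term i j v) \<partial>torus N)"
    unfolding sum_distrib_left using int by (intro Bochner_Integration.integral_sum integrable_sum) auto
  also have "\<dots> = (\<Sum>i<k. \<Sum>j\<in>{k..<N}. \<integral>v. F v * collision_term i j v \<partial>torus N)"
    using int by (intro sum.cong refl Bochner_Integration.integral_sum) auto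
  also have "\<dots> = (\<Sum>i<k. \<Sum>j\<in>{k..<N}. \<integral>v. F v * collision_term i k v \<partial>torus N)"
    by (intro sum.cong refl integral_collision_term_transpose[OF F]) auto
  also have "\<dots> = (real N - real k) * (\<Sum>i<k. \<integral>v. F v * collision_term i k v \<partial>torus N)"
    using k_less_N by (simp add: of_nat_diff sum_distrib_left)
  also have "(\<Sum>i<k. \<integral>v. F v * collision_term i k v \<partial>torus N)
      = (\<integral>v. F v * (\<Sum>i<k. collision_term i k v) \<partial>torus N)"
    unfolding sum_distrib_left using int k_less_N by (intro Bochner_Integration.integral_sum[symmetric]) auto
  finally show ?thesis .
qed

lemma integral_density_Lop:
  assumes F: "symmetric_density N F"
  shows "(\<integral>v. F v * Lop N Q \<phi> v \<partial>torus N)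
           = (\<integral>v. F v * (2 * (\<Sum>i<k. collision_term i k v) + collision_remainder v) \<partial>torus N)"
proof -
  let ?A = "\<lambda>v. \<Sum>j<k. \<Sum>i<j. collision_term i j v"
  let ?C = "\<lambda>v. \<Sum>i<k. collision_term i k v"
  let ?D = "\<lambda>v. \<Sum>i<k. \<Sum>j\<in>{k..<N}. collision_term i j v"
  have weights: "2 / (real N - 1) * (a + (real N - real k) * c)
      = 2 * c + 2 / (real N - 1) * a - 2 * (real k - 1) / (real N - 1) * c" for a c
    using two_le_N by (simp add: divide_simps) (simp add: algebra_simps)
  have int: "integrable (torus N) (\<lambda>v. F v * ?A v)" "integrable (torus N) (\<lambda>v. F v * ?C v)"
    "integrable (torus N) (\<lambda>v. F v * ?D v)"
    using k_less_N by (intro integrable_density_mult[OF F] bounded_meas_sum bounded_meas_collision_term; auto)+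
  have "(\<integral>v. F v * Lop N Q \<phi> v \<partial>torus N) = (\<integral>v. 2 / (real N - 1) * (F v * ?A v + F v * ?D v) \<partial>torus N)"
    by (intro Bochner_Integration.integral_cong) (simp_all add: Lop_eq_sum_collision_terms algebra_simps)
  also have "\<dots> = 2 / (real N - 1) * ((\<integral>v. F v * ?A v \<partial>torus N) + (real N - real k) * (\<integral>v. F v * ?C v \<partial>torus N))"
    using int by (simp add: integral_density_cross_terms[OF F])
  also have "\<dots> = 2 * (\<integral>v. F v * ?C v \<partial>torus N) + 2 / (real N - 1) * (\<integral>v. F v * ?A v \<partial>torus N)
      - 2 * (real k - 1) / (real N - 1) * (\<integral>v. F v * ?C v \<partial>torus N)"
    by (rule weights)
  also have "\<dots> = (\<integral>v. 2 * (F v * ?C v) + 2 / (real N - 1) * (F v * ?A v)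
      - 2 * (real k - 1) / (real N - 1) * (F v * ?C v) \<partial>torus N)"
    using int by simp
  also have "\<dots> = (\<integral>v. F v * (2 * ?C v + collision_remainder v) \<partial>torus N)"
    unfolding collision_remainder_def by (intro Bochner_Integration.integral_cong) (simp_all add: algebra_simps)
  finally show ?thesis .
qed

end

theorem mainTheorem5:
  fixes N k :: nat
    and Q :: "((complex \<times> complex) \<Rightarrow> real) \<Rightarrow> (complex \<times> complex) \<Rightarrow> real"
    and F \<phi> :: "(nat \<Rightarrow> complex) \<Rightarrow> real"
  assumes "N \<ge> 2"
    and "N \<ge> k + 1"
    and "markov_op (circle \<Otimes>\<^sub>M circle) Q"
    and "\<And>i j \<psi>. i < N \<Longrightarrow> j < N \<Longrightarrow> i \<noteq> j \<Longrightarrow> bounded_meas (torus N) \<psi> \<Longrightarrow>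
           Qij Q i j \<psi> \<in> borel_measurable (torus N)"
    and "symmetric_density N F"
    and "bounded_meas (torus N) \<phi>"
    and "depends_only N k \<phi>"
  shows "\<exists>\<psi>. \<psi> \<in> borel_measurable (torus N) \<and> depends_only N (k + 1) \<psi> \<and>
           (\<forall>v\<in>space (torus N). \<bar>\<psi> v\<bar> \<le> 6 * (real k * (real k - 1)) / (real N - 1) * sup_norm (torus N) \<phi>) \<and>
           (\<integral>v. F v * Lop N Q \<phi> v \<partial>torus N) =
           (\<integral>v. F v * ((2 * (\<Sum>i<k. (Qij Q i k \<phi> v - \<phi> v))) + \<psi> v) \<partial>torus N)"
proof -
  interpret pair_interaction N k Q \<phi>
    using assms by unfold_locales auto
  show ?thesis
  proof (intro exI[of _ collision_remainder] conjI ballI)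
    show "collision_remainder \<in> borel_measurable (torus N)"
      using bounded_meas_collision_remainder unfolding bounded_meas_def by blast
    show "(\<integral>v. F v * Lop N Q \<phi> v \<partial>torus N) =
        (\<integral>v. F v * (2 * (\<Sum>i<k. Qij Q i k \<phi> v - \<phi> v) + collision_remainder v) \<partial>torus N)"
      using integral_density_Lop[OF assms(5)] unfolding collision_term_def .
    show "depends_only N (k + 1) collision_remainder"
      by (rule depends_only_collision_remainder)
  qed (rule abs_collision_remainder_le)
qed

end
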